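(* Let $F$ be a directed graph on a finite vertex set whose underlying undirected graph is simple, in which every node has out-degree at most $1$ (a directed pseudo-forest), and in which no pair of nodes is joined by edges in both directions. Let $w$ be positive edge weights and let $\chi:V(F)\to\{1,2,3\}$ be a proper coloring of the underlying undirected graph. Mark edges as follows: each node $x$ with $\chi(x)=1$ marks its outgoing edge (if it has one) when the weight of that edge is at least the sum of weights of all its incoming edges, and otherwise marks all its incoming edges; each node $x$ with $\chi(x)=2$ marks its outgoing edge if the head of that edge has color $3$ and its weight is at least the sum of the weights of the incoming edges of $x$ whose tails have color $3$, and otherwise marks all incoming edges of $x$ whose tails have color $3$; nodes of color $3$ mark nothing. Then the set of marked edges contains no cycle (its underlying undirected graph is a forest). *)

theory Defs
  imports Complex_Main
begin

text \<open>A directed graph is a finite vertex set V with an edge set E \<subseteq> V \<times> V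
  (edge (u,v) goes from tail u to head v).\<close>

definition in_weight :: "('a \<times> 'a) set \<Rightarrow> ('a \<times> 'a \<Rightarrow> real) \<Rightarrow> 'a \<Rightarrow> real" where
  "in_weight E w x = (\<Sum>e\<in>{e\<in>E. snd e = x}. w e)"

definition in_weight3 :: "('a \<times> 'a) set \<Rightarrow> ('a \<times> 'a \<Rightarrow> real) \<Rightarrow> ('a \<Rightarrow> nat) \<Rightarrow> 'a \<Rightarrow> real" where
  "in_weight3 E w \<chi> x = (\<Sum>e\<in>{e\<in>E. snd e = x \<and> \<chi> (fst e) = 3}. w e)"

definition marks_out :: "('a \<times> 'a) set \<Rightarrow> ('a \<times> 'a \<Rightarrow> real) \<Rightarrow> ('a \<Rightarrow> nat) \<Rightarrow> 'a \<Rightarrow> 'a \<Rightarrow> bool" where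
  "marks_out E w \<chi> x y \<longleftrightarrow> (x, y) \<in> E \<and>
     ((\<chi> x = 1 \<and> w (x, y) \<ge> in_weight E w x) \<or>
      (\<chi> x = 2 \<and> \<chi> y = 3 \<and> w (x, y) \<ge> in_weight3 E w \<chi> x))"

definition marked_edges :: "('a \<times> 'a) set \<Rightarrow> ('a \<times> 'a \<Rightarrow> real) \<Rightarrow> ('a \<Rightarrow> nat) \<Rightarrow> ('a \<times> 'a) set" where
  "marked_edges E w \<chi> =
     {(x, y). marks_out E w \<chi> x y}
     \<union> {(z, x). (z, x) \<in> E \<and> \<chi> x = 1 \<and> \<not> (\<exists>y. marks_out E w \<chi> x y)}
     \<union> {(z, x). (z, x) \<in> E \<and> \<chi> x = 2 \<and> \<chi> z = 3 \<and> \<not> (\<exists>y. marks_out E w \<chi> x y)}"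

definition uadj :: "('a \<times> 'a) set \<Rightarrow> 'a \<Rightarrow> 'a \<Rightarrow> bool" where
  "uadj M u v \<longleftrightarrow> (u, v) \<in> M \<or> (v, u) \<in> M"

definition has_undirected_cycle :: "('a \<times> 'a) set \<Rightarrow> bool" where
  "has_undirected_cycle M \<longleftrightarrow> (\<exists>xs. length xs \<ge> 3 \<and> distinct xs \<and>
      (\<forall>i < length xs. uadj M (xs ! i) (xs ! ((i + 1) mod length xs))))"

end

theory Submission
  imports Defs
begin

text \<open>Marked edges are edges of E, so every node has marked out-degree at most one, and an
  undirected cycle of marked edges is therefore consistently oriented: every node on it has a
  marked outgoing and a marked incoming edge on the cycle. A node of colour 1 that marks its
  outgoing edge marks none of its incoming edges, so no node of colour 1 lies on the cycle. A node
  of colour 2 on it then has a successor not of colour 1, so its outgoing edge was marked by the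
  node itself, and a predecessor of colour 3, whose edge it therefore did not mark -- impossible.
  So the cycle is monochromatic in colour 3, contradicting properness.\<close>

lemma marked_edges_subset: "marked_edges E w \<chi> \<subseteq> E"
  unfolding marked_edges_def marks_out_def by auto

lemma mod_add_two_neq:
  fixes i n :: nat
  assumes "i < n" "3 \<le> n"
  shows "(i + 2) mod n \<noteq> i"
  using assms by (cases "i + 2 < n") (auto simp: mod_if)

lemma cyclic_predecessor_exists:
  fixes i n :: nat
  assumes "i < n"
  shows "\<exists>j<n. (j + 1) mod n = i"
proof (cases i)
  case 0
  then show ?thesis using assms by (intro exI[of _ "n - 1"]) auto
next
  case (Suc k)
  then show ?thesis using assms by (intro exI[of _ k]) auto
qed

lemma functional_cycle_backward_step:
  assumes functional: "\<forall>x y z. (x, y) \<in> M \<and> (x, z) \<in> M \<longrightarrow> y = z"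
    and "distinct xs" and n: "length xs = n" "3 \<le> n"
    and cyc: "\<forall>i<n. uadj M (xs ! i) (xs ! ((i + 1) mod n))"
    and "i < n" and backward: "(xs ! ((i + 1) mod n), xs ! i) \<in> M"
  shows "(xs ! ((i + 2) mod n), xs ! ((i + 1) mod n)) \<in> M"
proof -
  have next_next: "((i + 1) mod n + 1) mod n = (i + 2) mod n"
    by (simp add: mod_simps)
  have "xs ! ((i + 2) mod n) \<noteq> xs ! i"
    using mod_add_two_neq[OF \<open>i < n\<close> n(2)] \<open>distinct xs\<close> \<open>i < n\<close> n
    by (simp add: nth_eq_iff_index_eq)
  then have "(xs ! ((i + 1) mod n), xs ! ((i + 2) mod n)) \<notin> M"
    using functional backward by blast
  moreover have "uadj M (xs ! ((i + 1) mod n)) (xs ! ((i + 2) mod n))"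
    using cyc[rule_format, of "(i + 1) mod n"] n next_next by simp
  ultimately show ?thesis unfolding uadj_def by blast
qed

lemma functional_cycle_oriented:
  assumes functional: "\<forall>x y z. (x, y) \<in> M \<and> (x, z) \<in> M \<longrightarrow> y = z"
    and dist: "distinct xs" and n: "length xs = n" "3 \<le> n"
    and cyc: "\<forall>i<n. uadj M (xs ! i) (xs ! ((i + 1) mod n))"
  shows "(\<forall>i<n. (xs ! i, xs ! ((i + 1) mod n)) \<in> M) \<or>
         (\<forall>i<n. (xs ! ((i + 1) mod n), xs ! i) \<in> M)"
proof (cases "\<forall>i<n. (xs ! i, xs ! ((i + 1) mod n)) \<in> M")
  case True
  then show ?thesis ..
next
  case False
  then obtain j where j: "j < n" "(xs ! j, xs ! ((j + 1) mod n)) \<notin> M" by blast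
  have back_from_j: "(xs ! ((j + k + 1) mod n), xs ! ((j + k) mod n)) \<in> M" for k
  proof (induction k)
    case 0
    then show ?case using j cyc unfolding uadj_def by auto
  next
    case (Suc k)
    have "(j + k) mod n < n" using n by simp
    moreover have "((j + k) mod n + 1) mod n = (j + Suc k) mod n"
      "((j + k) mod n + 2) mod n = (j + Suc k + 1) mod n"
      by (simp_all add: mod_simps)
    ultimately show ?case
      using functional_cycle_backward_step[OF functional dist n cyc, of "(j + k) mod n"] Suc.IH
      by simp
  qed
  have "\<forall>i<n. (xs ! ((i + 1) mod n), xs ! i) \<in> M"
  proof (intro allI impI)
    fix i assume "i < n"
    then have "(j + (i + n - j)) mod n = i" using j by simp
    moreover have "j + (i + n - j) + 1 = (i + 1) + n" using j by simp
    ultimately show "(xs ! ((i + 1) mod n), xs ! i) \<in> M"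
      using back_from_j[of "i + n - j"] by (metis mod_add_self2)
  qed
  then show ?thesis ..
qed

lemma functional_cycle_in_out:
  assumes functional: "\<forall>x y z. (x, y) \<in> M \<and> (x, z) \<in> M \<longrightarrow> y = z"
    and "distinct xs" "3 \<le> length xs"
    and "\<forall>i<length xs. uadj M (xs ! i) (xs ! ((i + 1) mod length xs))"
    and "x \<in> set xs"
  shows "(\<exists>y\<in>set xs. (x, y) \<in> M) \<and> (\<exists>z\<in>set xs. (z, x) \<in> M)"
proof -
  define n where "n = length xs"
  obtain i where i: "i < n" "x = xs ! i"
    using \<open>x \<in> set xs\<close> by (auto simp: in_set_conv_nth n_def)
  obtain j where j: "j < n" "(j + 1) mod n = i"
    using cyclic_predecessor_exists[OF i(1)] by blast
  have succ: "xs ! ((k + 1) mod n) \<in> set xs" for k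
    using i(1) nth_mem[of "(k + 1) mod n" xs] by (simp add: n_def[symmetric])
  have "(\<forall>k<n. (xs ! k, xs ! ((k + 1) mod n)) \<in> M) \<or>
        (\<forall>k<n. (xs ! ((k + 1) mod n), xs ! k) \<in> M)"
    using functional_cycle_oriented[OF functional assms(2)] assms(3,4) by (simp add: n_def)
  then show ?thesis
  proof (elim disjE)
    assume fwd: "\<forall>k<n. (xs ! k, xs ! ((k + 1) mod n)) \<in> M"
    show ?thesis using fwd[rule_format, OF i(1)] fwd[rule_format, OF j(1)] j i succ
      by (metis n_def nth_mem)
  next
    assume bwd: "\<forall>k<n. (xs ! ((k + 1) mod n), xs ! k) \<in> M"
    show ?thesis using bwd[rule_format, OF i(1)] bwd[rule_format, OF j(1)] j i succ
      by (metis n_def nth_mem)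
  qed
qed

lemma colour_one_not_marked_through:
  assumes col_proper: "\<forall>(x, y)\<in>E. \<chi> x \<noteq> \<chi> y"
    and "\<chi> x = 1"
    and out: "(x, y) \<in> marked_edges E w \<chi>" and inc: "(z, x) \<in> marked_edges E w \<chi>"
  shows False
proof -
  have "\<chi> y \<noteq> \<chi> x" "\<chi> z \<noteq> \<chi> x"
    using out inc marked_edges_subset col_proper by fastforce+
  then have "marks_out E w \<chi> x y"
    using out \<open>\<chi> x = 1\<close> unfolding marked_edges_def by auto
  then show False
    using inc \<open>\<chi> x = 1\<close> \<open>\<chi> z \<noteq> \<chi> x\<close> unfolding marked_edges_def marks_out_def by auto
qed

lemma colour_two_not_marked_through:
  assumes col_proper: "\<forall>(x, y)\<in>E. \<chi> x \<noteq> \<chi> y"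
    and "\<chi> x = 2" "\<chi> y \<noteq> 1" "\<chi> z = 3"
    and out: "(x, y) \<in> marked_edges E w \<chi>" and inc: "(z, x) \<in> marked_edges E w \<chi>"
  shows False
proof -
  have "\<chi> y \<noteq> \<chi> x" using out marked_edges_subset col_proper by fastforce
  then have "marks_out E w \<chi> x y"
    using out \<open>\<chi> x = 2\<close> \<open>\<chi> y \<noteq> 1\<close> unfolding marked_edges_def by auto
  then show False
    using inc \<open>\<chi> x = 2\<close> \<open>\<chi> z = 3\<close> unfolding marked_edges_def marks_out_def by auto
qed

lemma marked_edges_no_in_out_closed_set:
  assumes E_sub: "E \<subseteq> V \<times> V"
    and col_range: "\<forall>x\<in>V. \<chi> x \<in> {1, 2, 3}"
    and col_proper: "\<forall>(x, y)\<in>E. \<chi> x \<noteq> \<chi> y"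
    and "S \<noteq> {}"
    and closed: "\<forall>x\<in>S. (\<exists>y\<in>S. (x, y) \<in> marked_edges E w \<chi>) \<and>
                        (\<exists>z\<in>S. (z, x) \<in> marked_edges E w \<chi>)"
  shows False
proof -
  let ?M = "marked_edges E w \<chi>"
  have proper: "\<chi> x \<noteq> \<chi> y" if "(x, y) \<in> ?M" for x y
    using that marked_edges_subset col_proper by fastforce
  have in_range: "\<chi> x \<in> {1, 2, 3}" if "x \<in> S" for x
    using that closed marked_edges_subset E_sub col_range by blast
  have not_one: "\<chi> x \<noteq> 1" if "x \<in> S" for x
    using closed that colour_one_not_marked_through[OF col_proper] by blast
  have not_two: "\<chi> x \<noteq> 2" if "x \<in> S" for x
  proof
    assume "\<chi> x = 2"
    obtain y z where yz: "y \<in> S" "(x, y) \<in> ?M" "z \<in> S" "(z, x) \<in> ?M"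
      using closed \<open>x \<in> S\<close> by blast
    have "\<chi> z = 3"
      using in_range[OF yz(3)] proper[OF yz(4)] not_one[OF yz(3)] \<open>\<chi> x = 2\<close> by auto
    then show False
      using colour_two_not_marked_through[OF col_proper \<open>\<chi> x = 2\<close> not_one[OF yz(1)]] yz
      by blast
  qed
  obtain x y where xy: "x \<in> S" "y \<in> S" "(x, y) \<in> ?M"
    using closed \<open>S \<noteq> {}\<close> by blast
  have "\<chi> x = 3" "\<chi> y = 3"
    using in_range not_one not_two xy(1,2) by fastforce+
  with proper[OF xy(3)] show False by simp
qed

theorem mainTheorem15:
  fixes V :: "'a set" and E :: "('a \<times> 'a) set"
    and w :: "'a \<times> 'a \<Rightarrow> real" and \<chi> :: "'a \<Rightarrow> nat"
  assumes finV: "finite V"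
    and E_sub: "E \<subseteq> V \<times> V"
    and no_loops: "\<forall>x. (x, x) \<notin> E"
    and outdeg: "\<forall>x y z. (x, y) \<in> E \<and> (x, z) \<in> E \<longrightarrow> y = z"
    and no_antiparallel: "\<forall>x y. (x, y) \<in> E \<longrightarrow> (y, x) \<notin> E"
    and w_pos: "\<forall>e\<in>E. w e > 0"
    and col_range: "\<forall>x\<in>V. \<chi> x \<in> {1, 2, 3}"
    and col_proper: "\<forall>(x, y)\<in>E. \<chi> x \<noteq> \<chi> y"
  shows "\<not> has_undirected_cycle (marked_edges E w \<chi>)"
proof
  let ?M = "marked_edges E w \<chi>"
  assume "has_undirected_cycle ?M"
  then obtain xs where len: "3 \<le> length xs" and dist: "distinct xs"
    and cyc: "\<forall>i<length xs. uadj ?M (xs ! i) (xs ! ((i + 1) mod length xs))"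
    unfolding has_undirected_cycle_def by blast
  have functional: "\<forall>x y z. (x, y) \<in> ?M \<and> (x, z) \<in> ?M \<longrightarrow> y = z"
    using outdeg marked_edges_subset by blast
  have "set xs \<noteq> {}" using len by auto
  with functional_cycle_in_out[OF functional dist len cyc]
  show False
    using marked_edges_no_in_out_closed_set[OF E_sub col_range col_proper] by blast
qed

end
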